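(* Let $\alpha\in\mathbb{R}\setminus\{0\}$, let $h(z)=f_Z(z;\alpha)$ be the $BASLa_2(\alpha)$ density and let $$h_1(z)=\frac{4+8\alpha^2z^2+\alpha^4z^4}{C_2(\alpha)}\cdot\frac12 e^{-|z|},\qquad z\in\mathbb{R}$$ (the symmetric component density). Then $h_1$ is a probability density and $$\sup_{z\in\mathbb{R}}\frac{h(z)}{h_1(z)}=\frac{3+2\sqrt2}{3}.$$
   Context: For $\alpha\in\mathbb{R}$ let $C_2(\alpha)=4(1+4\alpha^2+6\alpha^4)$. A real random variable $Z$ has the Balakrishnan alpha skew Laplace distribution with parameter $\alpha$, written $Z\sim BASLa_2(\alpha)$, if it has probability density $$f_Z(z;\alpha)=\frac{\big[(1-\alpha z)^2+1\big]^2}{C_2(\alpha)}\cdot\frac12 e^{-|z|},\qquad z\in\mathbb{R}.$$ *)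

theory Defs
  imports "HOL-Analysis.Analysis"
begin

definition C2 :: "real \<Rightarrow> real" where
  "C2 \<alpha> = 4 * (1 + 4 * \<alpha>^2 + 6 * \<alpha>^4)"

definition BASLa2_density :: "real \<Rightarrow> real \<Rightarrow> real" where
  "BASLa2_density \<alpha> z = ((1 - \<alpha> * z)^2 + 1)^2 / C2 \<alpha> * (1/2) * exp (- \<bar>z\<bar>)"

definition BASLa2_sym_density :: "real \<Rightarrow> real \<Rightarrow> real" where
  "BASLa2_sym_density \<alpha> z = (4 + 8 * \<alpha>^2 * z^2 + \<alpha>^4 * z^4) / C2 \<alpha> * (1/2) * exp (- \<bar>z\<bar>)"

definition is_prob_density :: "(real \<Rightarrow> real) \<Rightarrow> bool" where
  "is_prob_density f \<longleftrightarrow> (\<forall>z. 0 \<le> f z) \<and> (f has_integral 1) UNIV"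

end

theory Submission
  imports Defs
begin

text \<open>
  The ratio of the two densities depends only on \<open>t = \<alpha> z\<close> and equals
  \<open>((1 - t)\<^sup>2 + 1)\<^sup>2 / (4 + 8 t\<^sup>2 + t\<^sup>4)\<close>. Clearing denominators, its distance to
  \<open>(3 + 2\<surd>2)/3\<close> is governed by the factorisation
  \<open>(3 + 2\<surd>2)(4 + 8t\<^sup>2 + t\<^sup>4) - 3((1 - t)\<^sup>2 + 1)\<^sup>2 = 2\<surd>2 (t + \<surd>2)\<^sup>2 (t\<^sup>2 + \<surd>2 t + 2)\<close>,
  whose second quadratic factor has no real roots; so the supremum is a maximum,
  attained at \<open>t = -\<surd>2\<close>. That \<open>h\<^sub>1\<close> is a density follows from
  \<open>\<integral>\<^sub>0\<^sup>\<infinity> t\<^sup>k e\<^sup>-\<^sup>t dt = k!\<close> and the evenness of \<open>h\<^sub>1\<close>.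
\<close>

lemma C2_pos: "C2 \<alpha> > 0"
  unfolding C2_def by (simp add: add_pos_nonneg)

lemma has_integral_power_mult_exp_neg:
  "((\<lambda>t::real. t ^ k * exp (- t)) has_integral fact k) {0..}"
proof -
  have "((\<lambda>t::real. t powr (real (k + 1) - 1) / exp t) has_integral Gamma (real (k + 1))) {0..}"
    by (rule Gamma_integral_real) simp
  moreover have "Gamma (real (k + 1)) = fact k"
    using Gamma_fact[of k] by (simp add: add.commute)
  ultimately have powr: "((\<lambda>t::real. t powr real k / exp t) has_integral fact k) {0..}"
    by simp
  show ?thesis
  proof (rule has_integral_spike_finite[OF _ _ powr, of "{0}"])
    fix t :: real
    assume "t \<in> {0..} - {0}"
    then show "t ^ k * exp (- t) = t powr real k / exp t"
      by (simp add: powr_realpow exp_minus field_simps)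
  qed simp
qed

lemma has_integral_even_real:
  fixes f :: "real \<Rightarrow> real"
  assumes even: "\<And>x. f (- x) = f x"
    and nonneg: "\<And>x. x \<ge> 0 \<Longrightarrow> 0 \<le> f x"
    and half: "(f has_integral I) {0..}"
  shows "(f has_integral 2 * I) UNIV"
proof -
  have "f absolutely_integrable_on {0..}"
    using half nonneg by (intro nonnegative_absolutely_integrable_1) (auto simp: has_integral_integrable)
  moreover have "integral {0..} f = I"
    using half by (rule integral_unique)
  ultimately have "(\<lambda>x. f (- x)) absolutely_integrable_on {..0} \<and> integral {..0} (\<lambda>x. f (- x)) = I"
    by (subst has_absolute_integral_reflect_real[where B = "{0..}"]) auto
  then have "(f has_integral I) {..0}"
    unfolding even by (metis absolutely_integrable_on_def has_integral_integral)
  then have "(f has_integral I + I) ({..0} \<union> {0..})"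
    by (rule has_integral_Un[OF _ half]) (simp add: atMost_Int_atLeast)
  moreover have "{..0} \<union> {0..} = (UNIV :: real set)"
    by auto
  ultimately show ?thesis
    by simp
qed

lemma BASLa2_sym_density_nonneg: "0 \<le> BASLa2_sym_density \<alpha> z"
  using C2_pos[of \<alpha>] by (simp add: BASLa2_sym_density_def add_nonneg_nonneg)

lemma BASLa2_sym_density_has_integral_half:
  "(BASLa2_sym_density \<alpha> has_integral 1/2) {0..}"
proof -
  let ?e = "\<lambda>k t. t ^ k * exp (- t) :: real"
  have moments: "((\<lambda>t. (1 / (2 * C2 \<alpha>)) * (4 * ?e 0 t + 8 * \<alpha>^2 * ?e 2 t + \<alpha>^4 * ?e 4 t))
      has_integral (1 / (2 * C2 \<alpha>)) * (4 * fact 0 + 8 * \<alpha>^2 * fact 2 + \<alpha>^4 * fact 4)) {0..}"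
    by (intro has_integral_mult_right has_integral_add has_integral_power_mult_exp_neg)
  have total: "(1 / (2 * C2 \<alpha>)) * (4 * fact 0 + 8 * \<alpha>^2 * fact 2 + \<alpha>^4 * fact 4) = (1/2 :: real)"
    using C2_pos[of \<alpha>] by (simp add: C2_def eval_nat_numeral field_simps)
  show ?thesis
    using moments unfolding total
    by (rule has_integral_eq[rotated]) (simp add: BASLa2_sym_density_def field_simps)
qed

lemma is_prob_density_BASLa2_sym_density: "is_prob_density (BASLa2_sym_density \<alpha>)"
proof -
  have "(BASLa2_sym_density \<alpha> has_integral 2 * (1/2)) UNIV"
    by (rule has_integral_even_real[OF _ BASLa2_sym_density_nonneg
          BASLa2_sym_density_has_integral_half]) (simp add: BASLa2_sym_density_def)
  then show ?thesis
    unfolding is_prob_density_def by (simp add: BASLa2_sym_density_nonneg)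
qed

definition BASLa2_ratio :: "real \<Rightarrow> real" where
  "BASLa2_ratio t = ((1 - t)^2 + 1)^2 / (4 + 8 * t^2 + t^4)"

lemma BASLa2_density_div_sym_density:
  "BASLa2_density \<alpha> z / BASLa2_sym_density \<alpha> z = BASLa2_ratio (\<alpha> * z)"
proof -
  define k where "k = exp (- \<bar>z\<bar>) / (2 * C2 \<alpha>)"
  have "k > 0"
    using C2_pos[of \<alpha>] by (simp add: k_def)
  moreover have "BASLa2_density \<alpha> z = ((1 - \<alpha> * z)^2 + 1)^2 * k"
    by (simp add: BASLa2_density_def k_def)
  moreover have "BASLa2_sym_density \<alpha> z = (4 + 8 * (\<alpha> * z)^2 + (\<alpha> * z)^4) * k"
    by (simp add: BASLa2_sym_density_def k_def power_mult_distrib mult_ac)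
  ultimately show ?thesis
    by (simp add: BASLa2_ratio_def)
qed

lemma BASLa2_ratio_gap_factorisation:
  "(3 + 2 * sqrt 2) * (4 + 8 * t^2 + t^4) - 3 * ((1 - t)^2 + 1)^2
     = 2 * sqrt 2 * (t + sqrt 2)^2 * (t^2 + sqrt 2 * t + 2)"
proof -
  have "sqrt 2 ^ 3 = 2 * sqrt (2::real)"
    by (simp add: power3_eq_cube)
  then show ?thesis
    by (simp add: algebra_simps power2_eq_square power3_eq_cube power4_eq_xxxx)
qed

lemma BASLa2_ratio_le: "BASLa2_ratio t \<le> (3 + 2 * sqrt 2) / 3"
proof -
  have "t^2 + sqrt 2 * t + 2 = (t + sqrt 2 / 2)^2 + 3/2"
    by (simp add: algebra_simps power2_eq_square)
  then have "t^2 + sqrt 2 * t + 2 > 0"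
    by (metis add_nonneg_pos zero_le_power2 zero_less_divide_iff zero_less_numeral)
  then have "0 \<le> 2 * sqrt 2 * (t + sqrt 2)^2 * (t^2 + sqrt 2 * t + 2)"
    by simp
  then have "3 * ((1 - t)^2 + 1)^2 \<le> (3 + 2 * sqrt 2) * (4 + 8 * t^2 + t^4)"
    unfolding BASLa2_ratio_gap_factorisation[symmetric] by simp
  moreover have "4 + 8 * t^2 + t^4 > 0"
    by (simp add: add_pos_nonneg)
  ultimately show ?thesis
    by (simp add: BASLa2_ratio_def field_simps)
qed

lemma BASLa2_ratio_minus_sqrt2: "BASLa2_ratio (- sqrt 2) = (3 + 2 * sqrt 2) / 3"
proof -
  have "sqrt 2 ^ 4 = (4::real)"
    by (simp add: power4_eq_xxxx)
  then show ?thesis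
    by (simp add: BASLa2_ratio_def power2_eq_square algebra_simps)
qed

theorem mainTheorem9:
  fixes \<alpha> :: real
  assumes "\<alpha> \<noteq> 0"
  shows "is_prob_density (BASLa2_sym_density \<alpha>)
       \<and> (SUP z\<in>(UNIV::real set). BASLa2_density \<alpha> z / BASLa2_sym_density \<alpha> z)
           = (3 + 2 * sqrt 2) / 3"
proof -
  have "(3 + 2 * sqrt 2) / 3 = BASLa2_ratio (\<alpha> * (- sqrt 2 / \<alpha>))"
    using assms by (simp add: BASLa2_ratio_minus_sqrt2)
  then have attained: "(3 + 2 * sqrt 2) / 3 \<in> (\<lambda>z. BASLa2_ratio (\<alpha> * z)) ` UNIV"
    by blast
  have "(SUP z\<in>UNIV. BASLa2_ratio (\<alpha> * z)) = (3 + 2 * sqrt 2) / 3"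
    using attained BASLa2_ratio_le by (intro cSup_eq_maximum) auto
  then show ?thesis
    by (simp add: BASLa2_density_div_sym_density is_prob_density_BASLa2_sym_density)
qed

end
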